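(* Let $E$ be a nonzero real Banach space, $S\colon E\rightrightarrows E^*$ be closed, monotone and quasidense, $\{(s_\beta,s_\beta^* )\}$ be a bounded net of elements of $G(S)$ and $(z,z^* )\in E\times E^*$. (a) If $s_\beta\to z$ in norm and $s_\beta^*\to z^*$ in $w(E^*,E)$, then $(z,z^* )\in G(S)$. (b) If $s_\beta\to z$ in $w(E,E^* )$ and $s_\beta^*\to z^*$ in norm, then $(z,z^* )\in G(S)$.
   Context: For a multifunction $S\colon E\rightrightarrows E^*$ with nonempty graph $G(S)$: closed means $G(S)$ norm-closed; monotone means $\langle s-t,s^*-t^*\rangle\ge0$ on $G(S)$; quasidense means for every $(x,x^* )\in E\times E^*$, $\inf_{(s,s^* )\in G(S)}[\tfrac12\|s-x\|^2+\tfrac12\|s^*-x^*\|^2+\langle s-x,s^*-x^*\rangle]\le0$. *)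

theory Defs
  imports "HOL-Analysis.Analysis"
begin

text \<open>The dual space E* is modelled as the Banach space of bounded linear
functionals E \<Rightarrow>L real; a multifunction S is identified with its graph
G :: (E \<times> E*) set.\<close>

definition closed_mf :: "('a::real_normed_vector \<times> ('a \<Rightarrow>\<^sub>L real)) set \<Rightarrow> bool" where
  "closed_mf G \<longleftrightarrow> closed G"

definition monotone_mf :: "('a::real_normed_vector \<times> ('a \<Rightarrow>\<^sub>L real)) set \<Rightarrow> bool" where
  "monotone_mf G \<longleftrightarrow>
     (\<forall>s s' t t'. (s, s') \<in> G \<longrightarrow> (t, t') \<in> G \<longrightarrow> 0 \<le> blinfun_apply (s' - t') (s - t))"

definition quasidense_mf :: "('a::real_normed_vector \<times> ('a \<Rightarrow>\<^sub>L real)) set \<Rightarrow> bool" where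
  "quasidense_mf G \<longleftrightarrow>
     (\<forall>x x'. Inf ((\<lambda>(s, s'). (1/2) * (norm (s - x))\<^sup>2 + (1/2) * (norm (s' - x'))\<^sup>2
                         + blinfun_apply (s' - x') (s - x)) ` G) \<le> 0)"

text \<open>Nets: indexed by a type 'i carrying a directed preorder le.\<close>

definition directed_preorder :: "('i \<Rightarrow> 'i \<Rightarrow> bool) \<Rightarrow> bool" where
  "directed_preorder le \<longleftrightarrow> (\<forall>a. le a a) \<and> (\<forall>a b c. le a b \<longrightarrow> le b c \<longrightarrow> le a c)
     \<and> (\<forall>a b. \<exists>c. le a c \<and> le b c)"

text \<open>The filter of tails of the directed set; convergence of a net
f along le to l is (f \<longlongrightarrow> l) (net_filter le).\<close>

definition net_filter :: "('i \<Rightarrow> 'i \<Rightarrow> bool) \<Rightarrow> 'i filter" where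
  "net_filter le = (INF a. principal {b. le a b})"

end

theory Submission
  imports Defs
begin

text \<open>For every \<open>(t, t') \<in> G\<close>, monotonicity gives
\<open>\<langle>s\<^sub>\<beta> - t, s\<^sub>\<beta>\<^sup>* - t\<^sup>*\<rangle> \<ge> 0\<close>. Under either hypothesis the bilinear pairing
passes to the limit, because one factor converges in norm while the other is bounded
and converges weakly; hence \<open>(z, z\<^sup>*)\<close> is monotonically related to all of \<open>G\<close>.
Quasidensity then yields points of \<open>G\<close> whose distance to \<open>(z, z\<^sup>*)\<close> is controlled
by the nonnegative pairing, so \<open>(z, z\<^sup>*)\<close> lies in the closure of \<open>G\<close>, i.e. in \<open>G\<close>.\<close>

lemma quasidense_monotonically_related_mem:
  fixes G :: "('a::real_normed_vector \<times> ('a \<Rightarrow>\<^sub>L real)) set"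
  assumes "closed G" and "quasidense_mf G" and "G \<noteq> {}"
    and related: "\<And>t t'. (t, t') \<in> G \<Longrightarrow> 0 \<le> blinfun_apply (t' - x') (t - x)"
  shows "(x, x') \<in> G"
proof -
  define f where "f = (\<lambda>(t::'a, t'::'a \<Rightarrow>\<^sub>L real). (1/2) * (norm (t - x))\<^sup>2
                         + (1/2) * (norm (t' - x'))\<^sup>2 + blinfun_apply (t' - x') (t - x))"
  have inf: "Inf (f ` G) \<le> 0"
    using \<open>quasidense_mf G\<close> unfolding quasidense_mf_def f_def by blast
  have "\<exists>y\<in>G. dist y (x, x') < e" if "e > 0" for e
  proof -
    have "0 < e\<^sup>2 / 2" using \<open>e > 0\<close> by simp
    with inf have "Inf (f ` G) < e\<^sup>2 / 2" by linarith
    then obtain t t' where tG: "(t, t') \<in> G" and "f (t, t') < e\<^sup>2 / 2"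
      using cInf_lessD[of "f ` G" "e\<^sup>2 / 2"] \<open>G \<noteq> {}\<close> by auto
    with related[OF tG] have "(dist t x)\<^sup>2 + (dist t' x')\<^sup>2 < e\<^sup>2"
      unfolding f_def dist_norm by simp
    then have "sqrt ((dist t x)\<^sup>2 + (dist t' x')\<^sup>2) < e"
      using \<open>e > 0\<close> real_sqrt_less_mono[of _ "e\<^sup>2"] by fastforce
    then show ?thesis using tG by (intro bexI[of _ "(t, t')"]) (simp_all add: dist_Pair_Pair)
  qed
  then show ?thesis using closed_approachable[OF \<open>closed G\<close>] by blast
qed

lemma eventually_net_filter:
  assumes "directed_preorder le"
  shows "eventually P (net_filter le) \<longleftrightarrow> (\<exists>a. \<forall>b. le a b \<longrightarrow> P b)"
proof -
  have "eventually P (INF a\<in>UNIV. principal {b. le a b})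
          \<longleftrightarrow> (\<exists>a\<in>UNIV. eventually P (principal {b. le a b}))"
  proof (rule eventually_INF_base)
    fix a b
    obtain c where "le a c" "le b c" and "\<And>d. le c d \<Longrightarrow> le a d \<and> le b d"
      using assms unfolding directed_preorder_def by metis
    then show "\<exists>c\<in>UNIV. principal {d. le c d} \<le> inf (principal {d. le a d}) (principal {d. le b d})"
      by (auto simp: inf_principal)
  qed simp
  then show ?thesis unfolding net_filter_def eventually_principal by simp
qed

lemma net_filter_ne_bot:
  assumes "directed_preorder le"
  shows "net_filter le \<noteq> bot"
  using assms eventually_net_filter[OF assms, of "\<lambda>_. False"]
  unfolding directed_preorder_def by (metis eventually_bot)

lemma tendsto_blinfun_apply_strong_weak_star:
  fixes x :: "'i \<Rightarrow> 'a::real_normed_vector" and y :: "'i \<Rightarrow> ('a \<Rightarrow>\<^sub>L 'b::real_normed_vector)"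
  assumes "(x \<longlongrightarrow> x0) F" and "Bfun y F"
    and "\<And>v. ((\<lambda>b. blinfun_apply (y b) v) \<longlongrightarrow> blinfun_apply y0 v) F"
  shows "((\<lambda>b. blinfun_apply (y b) (x b)) \<longlongrightarrow> blinfun_apply y0 x0) F"
proof -
  have "Zfun (\<lambda>b. blinfun_apply (y b) (x b - x0)) F"
    using blinfun.Bfun_prod_Zfun \<open>Bfun y F\<close> \<open>(x \<longlongrightarrow> x0) F\<close> tendsto_Zfun_iff by blast
  moreover have "Zfun (\<lambda>b. blinfun_apply (y b) x0 - blinfun_apply y0 x0) F"
    using assms(3) by (simp add: tendsto_Zfun_iff)
  ultimately have "Zfun (\<lambda>b. blinfun_apply (y b) (x b - x0)
                        + (blinfun_apply (y b) x0 - blinfun_apply y0 x0)) F"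
    by (rule Zfun_add)
  then show ?thesis by (simp add: tendsto_Zfun_iff blinfun.diff_right)
qed

lemma tendsto_blinfun_apply_weak_strong:
  fixes x :: "'i \<Rightarrow> 'a::real_normed_vector" and y :: "'i \<Rightarrow> ('a \<Rightarrow>\<^sub>L real)"
  assumes "Bfun x F" and "\<And>\<phi>::'a \<Rightarrow>\<^sub>L real. ((\<lambda>b. blinfun_apply \<phi> (x b)) \<longlongrightarrow> blinfun_apply \<phi> x0) F"
    and "(y \<longlongrightarrow> y0) F"
  shows "((\<lambda>b. blinfun_apply (y b) (x b)) \<longlongrightarrow> blinfun_apply y0 x0) F"
proof -
  have "Zfun (\<lambda>b. blinfun_apply (y b - y0) (x b)) F"
    using blinfun.Zfun_prod_Bfun \<open>Bfun x F\<close> \<open>(y \<longlongrightarrow> y0) F\<close> tendsto_Zfun_iff by blast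
  moreover have "Zfun (\<lambda>b. blinfun_apply y0 (x b) - blinfun_apply y0 x0) F"
    using assms(2) by (simp add: tendsto_Zfun_iff)
  ultimately have "Zfun (\<lambda>b. blinfun_apply (y b - y0) (x b)
                        + (blinfun_apply y0 (x b) - blinfun_apply y0 x0)) F"
    by (rule Zfun_add)
  then show ?thesis by (simp add: tendsto_Zfun_iff blinfun.diff_left)
qed

lemma quasidense_limit_mem:
  fixes G :: "('a::real_normed_vector \<times> ('a \<Rightarrow>\<^sub>L real)) set"
  assumes "closed G" and "monotone_mf G" and "quasidense_mf G" and "F \<noteq> bot"
    and inG: "\<And>b. (s b, s' b) \<in> G"
    and weak: "\<And>\<phi>::'a \<Rightarrow>\<^sub>L real. ((\<lambda>b. blinfun_apply \<phi> (s b)) \<longlongrightarrow> blinfun_apply \<phi> z) F"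
    and weak_star: "\<And>v. ((\<lambda>b. blinfun_apply (s' b) v) \<longlongrightarrow> blinfun_apply z' v) F"
    and pairing: "((\<lambda>b. blinfun_apply (s' b) (s b)) \<longlongrightarrow> blinfun_apply z' z) F"
  shows "(z, z') \<in> G"
proof (rule quasidense_monotonically_related_mem[OF \<open>closed G\<close> \<open>quasidense_mf G\<close>])
  show "G \<noteq> {}" using inG by blast
  fix t t' assume tG: "(t, t') \<in> G"
  have expand: "blinfun_apply (u' - t') (u - t)
      = blinfun_apply u' u - blinfun_apply u' t - blinfun_apply t' u + blinfun_apply t' t" for u u'
    by (simp add: blinfun.diff_left blinfun.diff_right)
  have "((\<lambda>b. blinfun_apply (s' b - t') (s b - t)) \<longlongrightarrow> blinfun_apply (z' - t') (z - t)) F"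
    unfolding expand using pairing weak_star[of t] weak[of t']
    by (intro tendsto_add tendsto_diff tendsto_const)
  moreover have "\<forall>\<^sub>F b in F. 0 \<le> blinfun_apply (s' b - t') (s b - t)"
    using \<open>monotone_mf G\<close> inG tG unfolding monotone_mf_def by simp
  ultimately have "0 \<le> blinfun_apply (z' - t') (z - t)"
    using tendsto_lowerbound \<open>F \<noteq> bot\<close> by blast
  also have "blinfun_apply (z' - t') (z - t) = blinfun_apply (t' - z') (t - z)"
    by (simp add: blinfun.diff_left blinfun.diff_right)
  finally show "0 \<le> blinfun_apply (t' - z') (t - z)" .
qed

theorem lemma6p3:
  fixes G :: "('a::banach \<times> ('a \<Rightarrow>\<^sub>L real)) set"
    and le :: "'i \<Rightarrow> 'i \<Rightarrow> bool"
    and s :: "'i \<Rightarrow> 'a" and s' :: "'i \<Rightarrow> ('a \<Rightarrow>\<^sub>L real)"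
    and z :: 'a and z' :: "'a \<Rightarrow>\<^sub>L real"
  assumes nonzero: "\<exists>x::'a. x \<noteq> 0"
    and nonempty: "G \<noteq> {}"
    and cl: "closed_mf G" and mono: "monotone_mf G" and qd: "quasidense_mf G"
    and dir: "directed_preorder le"
    and inG: "\<And>b. (s b, s' b) \<in> G"
    and bdd: "\<exists>M. \<forall>b. norm (s b) \<le> M \<and> norm (s' b) \<le> M"
  shows "((s \<longlongrightarrow> z) (net_filter le) \<and>
           (\<forall>x. ((\<lambda>b. blinfun_apply (s' b) x) \<longlongrightarrow> blinfun_apply z' x) (net_filter le))
           \<longrightarrow> (z, z') \<in> G)
       \<and> ((\<forall>\<phi>::'a \<Rightarrow>\<^sub>L real. ((\<lambda>b. blinfun_apply \<phi> (s b)) \<longlongrightarrow> blinfun_apply \<phi> z) (net_filter le)) \<and>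
           (s' \<longlongrightarrow> z') (net_filter le)
           \<longrightarrow> (z, z') \<in> G)"
proof -
  let ?F = "net_filter le"
  obtain M where M: "\<And>b. norm (s b) \<le> M" "\<And>b. norm (s' b) \<le> M" using bdd by blast
  have "Bfun s ?F" by (rule BfunI[where K = M]) (simp add: M)
  have "Bfun s' ?F" by (rule BfunI[where K = M]) (simp add: M)
  note limit_mem = quasidense_limit_mem[OF cl[unfolded closed_mf_def] mono qd
      net_filter_ne_bot[OF dir] inG]
  show ?thesis
  proof (intro conjI impI; elim conjE)
    assume "(s \<longlongrightarrow> z) ?F"
      and weak_star: "\<forall>v. ((\<lambda>b. blinfun_apply (s' b) v) \<longlongrightarrow> blinfun_apply z' v) ?F"
    show "(z, z') \<in> G"
    proof (rule limit_mem)
      show "((\<lambda>b. blinfun_apply \<phi> (s b)) \<longlongrightarrow> blinfun_apply \<phi> z) ?F"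
        for \<phi> :: "'a \<Rightarrow>\<^sub>L real"
        using \<open>(s \<longlongrightarrow> z) ?F\<close> by (rule blinfun.tendsto[OF tendsto_const])
      show "((\<lambda>b. blinfun_apply (s' b) (s b)) \<longlongrightarrow> blinfun_apply z' z) ?F"
        using \<open>(s \<longlongrightarrow> z) ?F\<close> \<open>Bfun s' ?F\<close> weak_star[rule_format]
        by (rule tendsto_blinfun_apply_strong_weak_star)
    qed (use weak_star in blast)
  next
    assume weak: "\<forall>\<phi>::'a \<Rightarrow>\<^sub>L real. ((\<lambda>b. blinfun_apply \<phi> (s b)) \<longlongrightarrow> blinfun_apply \<phi> z) ?F"
      and "(s' \<longlongrightarrow> z') ?F"
    show "(z, z') \<in> G"
    proof (rule limit_mem)
      show "((\<lambda>b. blinfun_apply (s' b) v) \<longlongrightarrow> blinfun_apply z' v) ?F" for v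
        using \<open>(s' \<longlongrightarrow> z') ?F\<close> tendsto_const by (rule blinfun.tendsto)
      show "((\<lambda>b. blinfun_apply (s' b) (s b)) \<longlongrightarrow> blinfun_apply z' z) ?F"
        using \<open>Bfun s ?F\<close> weak[rule_format] \<open>(s' \<longlongrightarrow> z') ?F\<close>
        by (rule tendsto_blinfun_apply_weak_strong)
    qed (use weak in blast)
  qed
qed

end
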